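(* Let $a>1$ and consider the planar system $$\dot x = x\,(|x|^a-|y|),\qquad \dot y = y\left(\tfrac12 |x|^a-|y|\right).$$ Then the equilibrium $0$ is essentially asymptotically stable.
   Context: For a flow on $\mathbb{R}^n$, $\ell$ denotes Lebesgue measure and $B_\varepsilon(X)$ the $\varepsilon$-neighbourhood of a set $X$. A compact invariant set $X$ is asymptotically stable relative to a set $N\subset\mathbb{R}^n$ if the usual conditions for asymptotic stability hold for initial conditions in the intersection of a neighbourhood of $X$ with $N$: for every neighbourhood $U$ of $X$ there is a neighbourhood $V$ of $X$ such that trajectories starting in $V\cap N$ remain in $U$ for all positive time, and there is a neighbourhood $W$ of $X$ such that trajectories starting in $W\cap N$ have $\omega$-limit set in $X$. $X$ is essentially asymptotically stable (e.a.s.) if it is asymptotically stable relative to some $N$ with $\lim_{\varepsilon\to0}\ell(B_\varepsilon(X)\cap N)/\ell(B_\varepsilon(X))=1$. Here $X=\{0\}$. *)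

theory Defs
  imports "HOL-Analysis.Analysis"
begin

definition fwd_sol :: "('a::real_normed_vector \<Rightarrow> 'a) \<Rightarrow> 'a \<Rightarrow> real set \<Rightarrow> (real \<Rightarrow> 'a) \<Rightarrow> bool" where
  "fwd_sol f p I \<phi> \<longleftrightarrow> \<phi> 0 = p \<and> (\<forall>t\<in>I. (\<phi> has_vector_derivative f (\<phi> t)) (at t within I))"

definition nbhd :: "'a::topological_space set \<Rightarrow> 'a set \<Rightarrow> bool" where
  "nbhd X U \<longleftrightarrow> (\<exists>G. open G \<and> X \<subseteq> G \<and> G \<subseteq> U)"

definition omega_limit :: "(real \<Rightarrow> 'a::topological_space) \<Rightarrow> 'a set" where
  "omega_limit \<phi> = {q. \<exists>s::nat \<Rightarrow> real. filterlim s at_top sequentially \<and> ((\<phi> \<circ> s) \<longlongrightarrow> q) sequentially}"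

definition as_stable_rel :: "('a::real_normed_vector \<Rightarrow> 'a) \<Rightarrow> 'a set \<Rightarrow> 'a set \<Rightarrow> bool" where
  "as_stable_rel f X N \<longleftrightarrow>
     (\<forall>U. nbhd X U \<longrightarrow> (\<exists>V. nbhd X V \<and>
        (\<forall>p\<in>V \<inter> N. \<forall>T\<ge>0. \<forall>\<phi>. fwd_sol f p {0..T} \<phi> \<longrightarrow> \<phi> ` {0..T} \<subseteq> U))) \<and>
     (\<exists>W. nbhd X W \<and> (\<forall>p\<in>W \<inter> N. (\<exists>\<phi>. fwd_sol f p {0..} \<phi>) \<and>
        (\<forall>\<phi>. fwd_sol f p {0..} \<phi> \<longrightarrow> omega_limit \<phi> \<subseteq> X)))"

definition eps_nbhd :: "'a::metric_space set \<Rightarrow> real \<Rightarrow> 'a set" where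
  "eps_nbhd X \<epsilon> = {p. infdist p X < \<epsilon>}"

definition ess_as_stable :: "('a::euclidean_space \<Rightarrow> 'a) \<Rightarrow> 'a set \<Rightarrow> bool" where
  "ess_as_stable f X \<longleftrightarrow> (\<exists>N. N \<in> sets lebesgue \<and> as_stable_rel f X N \<and>
     ((\<lambda>\<epsilon>. measure lebesgue (eps_nbhd X \<epsilon> \<inter> N) / measure lebesgue (eps_nbhd X \<epsilon>)) \<longlongrightarrow> 1) (at_right 0))"

definition sysf :: "real \<Rightarrow> real \<times> real \<Rightarrow> real \<times> real" where
  "sysf a = (\<lambda>(x, y). (x * (\<bar>x\<bar> powr a - \<bar>y\<bar>), y * ((1/2) * \<bar>x\<bar> powr a - \<bar>y\<bar>)))"

end

theory Submission
  imports Defs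
begin

(* The set N of the definition is the cusp c |x|^a < |y| with c = (a - 1/2) / (a - 1).
   Along solutions L = ln (c |x|^a / |y|) has derivative (a - 1/2) |x|^a - (a - 1) |y|
   = (a - 1) (c |x|^a - |y|), which is negative inside the cusp, so the cusp is forward
   invariant. Inside it |x| and |y| do not increase, which gives stability, and
   (1 / y^2)' >= 1 / |y(0)| forces |y(t)| <= sqrt (|y(0)| / t), hence |x| <= |y|^(1/a) -> 0.
   Solutions starting in the cusp exist for all time: in the time s with ds = |y| dt the
   ratio |x|^a / |y| solves a logistic equation, which is integrated explicitly.
   Finally, the part of the e-ball outside the cusp lies in a box of area 4 c e^(a+1),
   which is o(e^2) because a > 1. *)

section \<open>Real-variable calculus\<close>

lemma deriv_nonneg_imp_le_within:
  fixes g g' :: "real \<Rightarrow> real"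
  assumes deriv: "\<And>t. t \<in> {l..u} \<Longrightarrow> (g has_real_derivative g' t) (at t within {l..u})"
    and nonneg: "\<And>t. s < t \<Longrightarrow> t < b \<Longrightarrow> 0 \<le> g' t"
    and "l \<le> s" "s \<le> b" "b \<le> u"
  shows "g s \<le> g b"
proof (rule DERIV_nonneg_imp_increasing_open[OF \<open>s \<le> b\<close>])
  fix x assume x: "s < x" "x < b"
  have "at x within {l..u} = at x"
    using x assms by (intro at_within_Icc_at) auto
  then show "\<exists>y. (g has_real_derivative y) (at x) \<and> 0 \<le> y"
    using deriv[of x] nonneg[OF x] x assms by auto
next
  have "continuous_on {l..u} g"
    unfolding continuous_on_eq_continuous_within using deriv DERIV_continuous by blast
  then show "continuous_on {s..b} g"
    by (rule continuous_on_subset) (use assms in auto)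
qed

lemma deriv_nonpos_imp_ge_within:
  fixes g g' :: "real \<Rightarrow> real"
  assumes "\<And>t. t \<in> {l..u} \<Longrightarrow> (g has_real_derivative g' t) (at t within {l..u})"
    and "\<And>t. s < t \<Longrightarrow> t < b \<Longrightarrow> g' t \<le> 0"
    and "l \<le> s" "s \<le> b" "b \<le> u"
  shows "g b \<le> g s"
  using deriv_nonneg_imp_le_within[of l u "\<lambda>t. - g t" "\<lambda>t. - g' t" s b] assms
  by (auto intro!: derivative_eq_intros)

lemma linear_ode_zero_iff:
  fixes u k :: "real \<Rightarrow> real"
  assumes deriv: "\<And>t. t \<in> {0..T} \<Longrightarrow> (u has_real_derivative u t * k t) (at t within {0..T})"
    and cont: "continuous_on {0..T} k" and t: "t \<in> {0..T}"
  shows "u t = 0 \<longleftrightarrow> u 0 = 0"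
proof -
  obtain K where K: "\<And>s. s \<in> {0..T} \<Longrightarrow> \<bar>k s\<bar> \<le> K"
    using compact_imp_bounded[OF compact_continuous_image[OF cont compact_Icc]]
    by (force simp: bounded_iff)
  have Kt: "- K \<le> k s \<and> k s \<le> K" if "0 < s" "s < t" for s
    using K[of s] that t by auto
  have E_deriv: "((\<lambda>s. (u s)\<^sup>2 * exp (- 2 * \<sigma> * K * s)) has_real_derivative
      2 * (u s)\<^sup>2 * exp (- 2 * \<sigma> * K * s) * (k s - \<sigma> * K)) (at s within {0..T})"
    if "s \<in> {0..T}" for s \<sigma>
    using deriv[OF that] by (auto intro!: derivative_eq_intros simp: algebra_simps power2_eq_square)
  have "(u t)\<^sup>2 * exp (- 2 * 1 * K * t) \<le> (u 0)\<^sup>2 * exp (- 2 * 1 * K * 0)"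
  proof (rule deriv_nonpos_imp_ge_within[OF E_deriv])
    fix s assume "0 < s" "s < t"
    then show "2 * (u s)\<^sup>2 * exp (- 2 * 1 * K * s) * (k s - 1 * K) \<le> 0"
      using Kt[of s] by (intro mult_nonneg_nonpos) auto
  qed (use t in auto)
  moreover have "(u 0)\<^sup>2 * exp (- 2 * (-1) * K * 0) \<le> (u t)\<^sup>2 * exp (- 2 * (-1) * K * t)"
  proof (rule deriv_nonneg_imp_le_within[OF E_deriv])
    fix s assume "0 < s" "s < t"
    then show "0 \<le> 2 * (u s)\<^sup>2 * exp (- 2 * (-1) * K * s) * (k s - (-1) * K)"
      using Kt[of s] by (intro mult_nonneg_nonneg) auto
  qed (use t in auto)
  ultimately show ?thesis
    by (auto simp: mult_le_0_iff)
qed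

lemma continuous_induction_neg:
  fixes g :: "real \<Rightarrow> real"
  assumes cont: "continuous_on {0..T} g" and g0: "g 0 < 0"
    and step: "\<And>t. 0 < t \<Longrightarrow> t \<le> T \<Longrightarrow> (\<And>s. 0 \<le> s \<Longrightarrow> s < t \<Longrightarrow> g s < 0) \<Longrightarrow> g t < 0"
    and t: "t \<in> {0..T}"
  shows "g t < 0"
proof (rule ccontr)
  define S where "S = {0..T} \<inter> g -` {0..}"
  assume "\<not> g t < 0"
  then have "S \<noteq> {}"
    using t by (auto simp: S_def)
  moreover have "closed S"
    unfolding S_def by (rule continuous_closed_preimage[OF cont]) auto
  moreover have bdd: "bdd_below S"
    by (auto simp: S_def bdd_below_def)
  ultimately have inf_S: "Inf S \<in> S"
    by (intro closed_contains_Inf)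
  have "g s < 0" if "0 \<le> s" "s < Inf S" for s
  proof (rule ccontr)
    assume "\<not> g s < 0"
    then have "s \<in> S"
      using that inf_S by (auto simp: S_def)
    then show False
      using cInf_lower[OF _ bdd] that by fastforce
  qed
  moreover have "0 < Inf S" "Inf S \<le> T"
    using inf_S g0 by (auto simp: S_def less_le)
  ultimately have "g (Inf S) < 0"
    using step by blast
  then show False
    using inf_S by (simp add: S_def)
qed

lemma continuous_has_antiderivative:
  fixes f :: "real \<Rightarrow> real"
  assumes cont: "continuous_on UNIV f"
  obtains R where "R 0 = 0" "\<And>s. (R has_real_derivative f s) (at s)"
proof -
  define R where "R s = integral {0..s} f - integral {s..0} f" for s
  have int: "f integrable_on {u..v}" for u v
    by (rule integrable_continuous_real) (rule continuous_on_subset[OF cont], simp)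
  have "(R has_real_derivative f s) (at s)" for s
  proof -
    define b where "b = min s 0 - 1"
    have R_eq: "R u = integral {b..u} f - integral {b..0} f" if "b < u" for u
    proof (cases "0 \<le> u")
      case True
      have "integral {b..0} f + integral {0..u} f = integral {b..u} f"
        by (rule Henstock_Kurzweil_Integration.integral_combine) (use True int in \<open>auto simp: b_def\<close>)
      moreover have "integral {u..0} f = 0"
        using True by (cases "u = 0") auto
      ultimately show ?thesis
        by (simp add: R_def)
    next
      case False
      have "integral {b..u} f + integral {u..0} f = integral {b..0} f"
        by (rule Henstock_Kurzweil_Integration.integral_combine) (use False that int in auto)
      then show ?thesis
        using False by (simp add: R_def)
    qed
    have "((\<lambda>u. integral {b..u} f) has_real_derivative f s) (at s within {b..s+1})"
      by (rule integral_has_real_derivative[OF continuous_on_subset[OF cont]]) (auto simp: b_def)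
    then have "((\<lambda>u. integral {b..u} f - integral {b..0} f) has_real_derivative f s) (at s within {b..s+1})"
      by (rule DERIV_diff[where E=0, simplified]) simp
    moreover have "at s within {b..s+1} = at s"
      by (rule at_within_Icc_at) (auto simp: b_def)
    ultimately have "((\<lambda>u. integral {b..u} f - integral {b..0} f) has_real_derivative f s) (at s)"
      by simp
    then show "(R has_real_derivative f s) (at s)"
      by (rule has_field_derivative_transform_within_open[where S="{b<..}"]) (auto simp: b_def R_eq)
  qed
  moreover have "R 0 = 0"
    by (simp add: R_def)
  ultimately show thesis
    using that by blast
qed

lemma inv_has_real_derivative:
  fixes R r :: "real \<Rightarrow> real"
  assumes dR: "\<And>s. (R has_real_derivative r s) (at s)" and pos: "\<And>s. 0 < r s"
    and y: "R a < y" "y < R b"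
  shows "R (inv R y) = y" and "(inv R has_real_derivative 1 / r (inv R y)) (at y)"
proof -
  have mono: "strict_mono R"
  proof (rule strict_monoI)
    fix x y :: real assume "x < y"
    then show "R x < R y"
      by (rule DERIV_pos_imp_increasing) (use dR pos in blast)
  qed
  have isCont_R: "isCont R s" for s
    using dR by (rule DERIV_isCont)
  have inv_R: "inv R (R s) = s" for s
    using strict_mono_imp_inj_on[OF mono] by (simp add: inv_into_f_f)
  have R_inv: "R (inv R z) = z" if z: "R a < z" "z < R b" for z
  proof -
    have "a \<le> b"
      using z strict_mono_less[OF mono, of b a] by linarith
    moreover have "continuous_on {a..b} R"
      using isCont_R by (simp add: continuous_at_imp_continuous_on)
    ultimately obtain x where "R x = z"
      using IVT'[of R a z b] z by auto
    then show ?thesis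
      using inv_R by metis
  qed
  then show "R (inv R y) = y"
    using y .
  have "isCont (inv R) (R (inv R y))"
    by (rule isCont_inverse_function[where d=1]) (simp_all add: inv_R isCont_R)
  then have "isCont (inv R) y"
    using R_inv[OF y] by simp
  then have "(inv R has_real_derivative inverse (r (inv R y))) (at y)"
    using y pos[of "inv R y"] by (intro DERIV_inverse_function[where f=R and a="R a" and b="R b"] dR R_inv) auto
  then show "(inv R has_real_derivative 1 / r (inv R y)) (at y)"
    by (simp add: inverse_eq_divide)
qed

lemma deriv_ge_imp_linear_lower_bound:
  fixes R r :: "real \<Rightarrow> real"
  assumes dR: "\<And>s. (R has_real_derivative r s) (at s)" and ge: "\<And>s. 0 \<le> s \<Longrightarrow> m \<le> r s"
    and s: "0 \<le> s"
  shows "R 0 + m * s \<le> R s"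
proof -
  have "(\<lambda>s. R s - m * s) 0 \<le> (\<lambda>s. R s - m * s) s"
  proof (rule DERIV_nonneg_imp_nondecreasing[OF s])
    fix x :: real assume "0 \<le> x"
    then show "\<exists>y. ((\<lambda>s. R s - m * s) has_real_derivative y) (at x) \<and> 0 \<le> y"
      using ge[of x] by (intro exI[of _ "r x - m"]) (auto intro!: derivative_eq_intros dR)
  qed
  then show ?thesis
    by simp
qed

lemma positive_autonomous_ode_solution:
  fixes F :: "real \<Rightarrow> real"
  assumes cont: "continuous_on UNIV F" and pos: "\<And>s. 0 < F s"
    and bounded: "\<And>s. 0 \<le> s \<Longrightarrow> F s \<le> M"
  obtains g where "g 0 = 0" "\<And>t. 0 \<le> t \<Longrightarrow> 0 \<le> g t"
    "\<And>t. 0 \<le> t \<Longrightarrow> (g has_real_derivative F (g t)) (at t)"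
proof -
  have "continuous_on UNIV (\<lambda>s. 1 / F s)"
    using cont pos by (intro continuous_intros) (auto simp: less_imp_neq[symmetric])
  then obtain R where R0: "R 0 = 0" and dR: "\<And>s. (R has_real_derivative 1 / F s) (at s)"
    using continuous_has_antiderivative by blast
  have "R x < R y" if "x < y" for x y
    using that by (rule DERIV_pos_imp_increasing) (use dR pos in \<open>auto intro!: exI[of _ "1 / F _"]\<close>)
  then have mono: "strict_mono R"
    by (rule strict_monoI)
  have M: "0 < M"
    using pos[of 0] bounded[of 0] by simp
  have R_ge: "s / M \<le> R s" if "0 \<le> s" for s
    using deriv_ge_imp_linear_lower_bound[OF dR _ that, of "1 / M"] bounded pos M R0
    by (simp add: frac_le)
  have range: "R (-1) < t" "t < R (t * M + 1)" if "0 \<le> t" for t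
  proof -
    show "R (-1) < t"
      using strict_monoD[OF mono, of "-1" 0] R0 that by simp
    have "t < (t * M + 1) / M"
      using M by (simp add: field_simps)
    also have "\<dots> \<le> R (t * M + 1)"
      using R_ge M that by simp
    finally show "t < R (t * M + 1)" .
  qed
  have "0 < 1 / F s" for s
    using pos[of s] by simp
  note inv_R = inv_has_real_derivative[OF dR this range]
  show thesis
  proof
    show "inv R 0 = 0"
      using inv_R(1)[of 0] R0 strict_mono_eq[OF mono] by fastforce
    fix t :: real assume t: "0 \<le> t"
    show "0 \<le> inv R t"
      using inv_R(1)[OF t] R0 t strict_mono_less_eq[OF mono, of 0 "inv R t"] by simp
    show "(inv R has_real_derivative F (inv R t)) (at t)"
      using inv_R(2)[OF t] t by simp
  qed
qed

section \<open>Forward solutions and relative stability\<close>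

lemma fwd_sol_subset:
  assumes "fwd_sol f p I \<phi>" "J \<subseteq> I"
  shows "fwd_sol f p J \<phi>"
  using assms by (auto simp: fwd_sol_def intro: has_vector_derivative_within_subset)

lemma fwd_sol_continuous_on:
  assumes "fwd_sol f p I \<phi>"
  shows "continuous_on I \<phi>"
  using assms unfolding fwd_sol_def continuous_on_eq_continuous_within
  using has_vector_derivative_continuous by blast

lemma omega_limit_tendsto:
  fixes \<phi> :: "real \<Rightarrow> 'a::t2_space"
  assumes "(\<phi> \<longlongrightarrow> q) at_top"
  shows "omega_limit \<phi> \<subseteq> {q}"
proof
  fix r assume "r \<in> omega_limit \<phi>"
  then obtain s :: "nat \<Rightarrow> real" where s: "filterlim s at_top sequentially"
    and to_r: "((\<phi> \<circ> s) \<longlongrightarrow> r) sequentially"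
    by (auto simp: omega_limit_def)
  have "((\<phi> \<circ> s) \<longlongrightarrow> q) sequentially"
    unfolding comp_def by (rule filterlim_compose[OF assms s])
  then show "r \<in> {q}"
    using to_r LIMSEQ_unique by auto
qed

lemma as_stable_rel_0I:
  fixes f :: "'a::real_normed_vector \<Rightarrow> 'a"
  assumes norm_le: "\<And>p T \<phi> t. p \<in> N \<Longrightarrow> fwd_sol f p {0..T} \<phi> \<Longrightarrow> t \<in> {0..T} \<Longrightarrow> norm (\<phi> t) \<le> norm p"
    and exists: "\<And>p. p \<in> N \<Longrightarrow> \<exists>\<phi>. fwd_sol f p {0..} \<phi>"
    and tendsto: "\<And>p \<phi>. p \<in> N \<Longrightarrow> fwd_sol f p {0..} \<phi> \<Longrightarrow> (\<phi> \<longlongrightarrow> 0) at_top"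
  shows "as_stable_rel f {0} N"
  unfolding as_stable_rel_def
proof (intro conjI allI impI)
  fix U :: "'a set" assume "nbhd {0} U"
  then obtain G where G: "open G" "0 \<in> G" "G \<subseteq> U"
    by (auto simp: nbhd_def)
  then obtain r where r: "0 < r" "ball 0 r \<subseteq> U"
    using open_contains_ball_eq[OF G(1), of 0] G(3) by blast
  have "nbhd {0} (ball 0 r)"
    unfolding nbhd_def using r by (intro exI[of _ "ball 0 r"]) auto
  moreover have "\<phi> ` {0..T} \<subseteq> U" if "p \<in> ball 0 r \<inter> N" "fwd_sol f p {0..T} \<phi>" for p T \<phi>
  proof (rule image_subsetI)
    fix t assume "t \<in> {0..T}"
    then have "norm (\<phi> t) < r"
      using norm_le[of p T \<phi> t] that by auto
    then show "\<phi> t \<in> U"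
      using r by auto
  qed
  ultimately show "\<exists>V. nbhd {0} V \<and> (\<forall>p\<in>V \<inter> N. \<forall>T\<ge>0. \<forall>\<phi>. fwd_sol f p {0..T} \<phi> \<longrightarrow> \<phi> ` {0..T} \<subseteq> U)"
    by blast
next
  show "\<exists>W. nbhd {0} W \<and> (\<forall>p\<in>W \<inter> N. (\<exists>\<phi>. fwd_sol f p {0..} \<phi>) \<and>
      (\<forall>\<phi>. fwd_sol f p {0..} \<phi> \<longrightarrow> omega_limit \<phi> \<subseteq> {0}))"
  proof (intro exI[of _ UNIV] conjI ballI allI impI)
    show "nbhd {0} UNIV"
      unfolding nbhd_def by (intro exI[of _ UNIV]) auto
  qed (use exists tendsto omega_limit_tendsto in blast)+
qed

lemma eps_nbhd_singleton: "eps_nbhd {x} e = ball x e"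
  by (auto simp: eps_nbhd_def dist_commute)

section \<open>The invariant cusp\<close>

definition cusp :: "real \<Rightarrow> real \<Rightarrow> (real \<times> real) set" where
  "cusp a c = {p. c * \<bar>fst p\<bar> powr a < \<bar>snd p\<bar>}"

lemma cusp_antimono:
  assumes "0 \<le> c" "c \<le> c'"
  shows "cusp a c' \<subseteq> cusp a c"
proof
  fix p assume "p \<in> cusp a c'"
  moreover have "c * \<bar>fst p\<bar> powr a \<le> c' * \<bar>fst p\<bar> powr a"
    using assms by (intro mult_right_mono) auto
  ultimately show "p \<in> cusp a c"
    by (simp add: cusp_def)
qed

lemma snd_nonzero_if_cusp:
  assumes "p \<in> cusp a c" "0 \<le> c"
  shows "snd p \<noteq> 0"
proof -
  have "0 \<le> c * \<bar>fst p\<bar> powr a"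
    using assms(2) by simp
  then show ?thesis
    using assms(1) by (auto simp: cusp_def)
qed

lemma fwd_sol_sysf_components:
  assumes "fwd_sol (sysf a) p I \<phi>" "t \<in> I"
  shows "((\<lambda>t. fst (\<phi> t)) has_real_derivative fst (\<phi> t) * (\<bar>fst (\<phi> t)\<bar> powr a - \<bar>snd (\<phi> t)\<bar>)) (at t within I)"
    and "((\<lambda>t. snd (\<phi> t)) has_real_derivative snd (\<phi> t) * (1/2 * \<bar>fst (\<phi> t)\<bar> powr a - \<bar>snd (\<phi> t)\<bar>)) (at t within I)"
proof -
  have "(\<phi> has_derivative (\<lambda>h. h *\<^sub>R sysf a (\<phi> t))) (at t within I)"
    using assms by (simp add: fwd_sol_def has_vector_derivative_def)
  from has_derivative_fst[OF this] has_derivative_snd[OF this]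
  show "((\<lambda>t. fst (\<phi> t)) has_real_derivative fst (\<phi> t) * (\<bar>fst (\<phi> t)\<bar> powr a - \<bar>snd (\<phi> t)\<bar>)) (at t within I)"
    and "((\<lambda>t. snd (\<phi> t)) has_real_derivative snd (\<phi> t) * (1/2 * \<bar>fst (\<phi> t)\<bar> powr a - \<bar>snd (\<phi> t)\<bar>)) (at t within I)"
    by (simp_all add: sysf_def has_field_derivative_def case_prod_beta mult_commute_abs)
qed

lemma fwd_sol_sysf_axes_invariant:
  assumes "0 < a" and sol: "fwd_sol (sysf a) p {0..T} \<phi>" and t: "t \<in> {0..T}"
  shows "fst (\<phi> t) = 0 \<longleftrightarrow> fst p = 0" and "snd (\<phi> t) = 0 \<longleftrightarrow> snd p = 0"
proof -
  have p: "\<phi> 0 = p"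
    using sol by (simp add: fwd_sol_def)
  have cont: "continuous_on {0..T} (\<lambda>t. \<kappa> * \<bar>fst (\<phi> t)\<bar> powr a - \<bar>snd (\<phi> t)\<bar>)" for \<kappa>
    using fwd_sol_continuous_on[OF sol] \<open>0 < a\<close>
    by (intro continuous_intros continuous_on_powr') auto
  show "fst (\<phi> t) = 0 \<longleftrightarrow> fst p = 0"
    using linear_ode_zero_iff[OF fwd_sol_sysf_components(1)[OF sol] _ t] cont[of 1] p by simp
  show "snd (\<phi> t) = 0 \<longleftrightarrow> snd p = 0"
    using linear_ode_zero_iff[OF fwd_sol_sysf_components(2)[OF sol] _ t] cont[of "1/2"] p by simp
qed

(* The log ratio ln (c |x|^a / |y|), written with squares so that it is differentiable
   by the standard rules wherever x and y are nonzero. *)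
lemma log_ratio_neg_iff_cusp:
  assumes "x \<noteq> 0" "y \<noteq> 0" "0 < c"
  shows "ln c + a/2 * ln (x\<^sup>2) - 1/2 * ln (y\<^sup>2) < 0 \<longleftrightarrow> (x, y) \<in> cusp a c"
proof -
  have ln_sq: "ln (z\<^sup>2) = 2 * ln \<bar>z\<bar>" if "z \<noteq> 0" for z :: real
    using ln_realpow[of "\<bar>z\<bar>" 2] that by simp
  have "ln c + a/2 * ln (x\<^sup>2) - 1/2 * ln (y\<^sup>2) = ln (c * \<bar>x\<bar> powr a) - ln \<bar>y\<bar>"
    using assms by (simp add: ln_sq ln_mult ln_powr)
  moreover have "0 < c * \<bar>x\<bar> powr a"
    using assms by simp
  ultimately show ?thesis
    using assms by (simp add: cusp_def)
qed

lemma fwd_sol_sysf_log_ratio_deriv: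
  assumes sol: "fwd_sol (sysf a) p I \<phi>" and s: "s \<in> I"
    and x: "fst (\<phi> s) \<noteq> 0" and y: "snd (\<phi> s) \<noteq> 0"
  shows "((\<lambda>s. ln c + a/2 * ln ((fst (\<phi> s))\<^sup>2) - 1/2 * ln ((snd (\<phi> s))\<^sup>2)) has_real_derivative
      (a - 1/2) * \<bar>fst (\<phi> s)\<bar> powr a - (a - 1) * \<bar>snd (\<phi> s)\<bar>) (at s within I)"
proof -
  define x y where "x = fst (\<phi> s)" and "y = snd (\<phi> s)"
  have "((\<lambda>s. ln c + a/2 * ln ((fst (\<phi> s))\<^sup>2) - 1/2 * ln ((snd (\<phi> s))\<^sup>2)) has_real_derivative
      a/2 * (2 * x * (x * (\<bar>x\<bar> powr a - \<bar>y\<bar>)) / x\<^sup>2) - 1/2 * (2 * y * (y * (1/2 * \<bar>x\<bar> powr a - \<bar>y\<bar>)) / y\<^sup>2))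
      (at s within I)"
    unfolding x_def y_def using fwd_sol_sysf_components[OF sol s] x y
    by (auto intro!: derivative_eq_intros simp: power2_eq_square zero_less_mult_iff)
  moreover have "a/2 * (2 * x * (x * (\<bar>x\<bar> powr a - \<bar>y\<bar>)) / x\<^sup>2) - 1/2 * (2 * y * (y * (1/2 * \<bar>x\<bar> powr a - \<bar>y\<bar>)) / y\<^sup>2)
      = (a - 1/2) * \<bar>x\<bar> powr a - (a - 1) * \<bar>y\<bar>"
    using x y by (simp add: x_def y_def power2_eq_square field_simps)
  ultimately show ?thesis
    unfolding x_def y_def by (rule DERIV_cong)
qed

lemma invariance_coefficient_gt_1:
  fixes a c :: real
  assumes "1 < a" "a - 1/2 \<le> c * (a - 1)"
  shows "1 < c"
proof -
  have "1 * (a - 1) < c * (a - 1)"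
    using assms unfolding mult_1_left by linarith
  then show ?thesis
    by (rule mult_right_less_imp_less) (use assms in simp)
qed

lemma log_ratio_rate_nonpos_if_cusp:
  assumes a: "1 < a" and c: "a - 1/2 \<le> c * (a - 1)" and p: "p \<in> cusp a c"
  shows "(a - 1/2) * \<bar>fst p\<bar> powr a - (a - 1) * \<bar>snd p\<bar> \<le> 0"
proof -
  have "(a - 1/2) * \<bar>fst p\<bar> powr a \<le> (c * (a - 1)) * \<bar>fst p\<bar> powr a"
    using c by (intro mult_right_mono) auto
  also have "\<dots> = (a - 1) * (c * \<bar>fst p\<bar> powr a)"
    by simp
  also have "\<dots> \<le> (a - 1) * \<bar>snd p\<bar>"
    using p a by (intro mult_left_mono) (auto simp: cusp_def)
  finally show ?thesis
    by simp
qed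

lemma cusp_forward_invariant:
  assumes a: "1 < a" and c: "a - 1/2 \<le> c * (a - 1)"
    and sol: "fwd_sol (sysf a) p {0..T} \<phi>" and p: "p \<in> cusp a c" and t: "t \<in> {0..T}"
  shows "\<phi> t \<in> cusp a c"
proof -
  have "0 < c"
    using invariance_coefficient_gt_1[OF a c] by simp
  have \<phi>0: "\<phi> 0 = p"
    using sol by (simp add: fwd_sol_def)
  have y_ne: "snd (\<phi> s) \<noteq> 0" if "s \<in> {0..T}" for s
    using fwd_sol_sysf_axes_invariant(2)[OF _ sol that] snd_nonzero_if_cusp[OF p] a \<open>0 < c\<close> by simp
  show ?thesis
  proof (cases "fst p = 0")
    case True
    then have "fst (\<phi> t) = 0"
      using fwd_sol_sysf_axes_invariant(1)[OF _ sol t] a by simp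
    then show ?thesis
      using y_ne[OF t] a by (simp add: cusp_def)
  next
    case False
    then have x_ne: "fst (\<phi> s) \<noteq> 0" if "s \<in> {0..T}" for s
      using fwd_sol_sysf_axes_invariant(1)[OF _ sol that] a by simp
    define L where "L s = ln c + a/2 * ln ((fst (\<phi> s))\<^sup>2) - 1/2 * ln ((snd (\<phi> s))\<^sup>2)" for s
    have L_cusp: "L s < 0 \<longleftrightarrow> \<phi> s \<in> cusp a c" if "s \<in> {0..T}" for s
      using log_ratio_neg_iff_cusp[OF x_ne[OF that] y_ne[OF that] \<open>0 < c\<close>] by (simp add: L_def)
    have L_deriv: "(L has_real_derivative (a - 1/2) * \<bar>fst (\<phi> s)\<bar> powr a - (a - 1) * \<bar>snd (\<phi> s)\<bar>)
        (at s within {0..T})" if "s \<in> {0..T}" for s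
      unfolding L_def using fwd_sol_sysf_log_ratio_deriv[OF sol that x_ne[OF that] y_ne[OF that]] .
    have "L t < 0"
    proof (rule continuous_induction_neg[OF _ _ _ t])
      show "continuous_on {0..T} L"
        unfolding continuous_on_eq_continuous_within using L_deriv DERIV_continuous by blast
      show "L 0 < 0"
        using L_cusp[of 0] p \<phi>0 t by auto
      fix t' assume t': "0 < t'" "t' \<le> T" and neg: "\<And>s. 0 \<le> s \<Longrightarrow> s < t' \<Longrightarrow> L s < 0"
      have "L t' \<le> L 0"
      proof (rule deriv_nonpos_imp_ge_within[OF L_deriv])
        fix s assume "0 < s" "s < t'"
        then show "(a - 1/2) * \<bar>fst (\<phi> s)\<bar> powr a - (a - 1) * \<bar>snd (\<phi> s)\<bar> \<le> 0"
          using log_ratio_rate_nonpos_if_cusp[OF a c] L_cusp[of s] neg[of s] t' by simp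
      qed (use t' in auto)
      then show "L t' < 0"
        using \<open>L 0 < 0\<close> by simp
    qed
    then show ?thesis
      using L_cusp[OF t] by simp
  qed
qed

lemma fwd_sol_sysf_abs_le:
  assumes sol: "fwd_sol (sysf a) p {0..T} \<phi>"
    and in_cusp: "\<And>s. s \<in> {0..T} \<Longrightarrow> \<phi> s \<in> cusp a 1" and t: "t \<in> {0..T}"
  shows "\<bar>fst (\<phi> t)\<bar> \<le> \<bar>fst p\<bar>" and "\<bar>snd (\<phi> t)\<bar> \<le> \<bar>snd p\<bar>"
proof -
  have \<phi>0: "\<phi> 0 = p"
    using sol by (simp add: fwd_sol_def)
  have x_rate: "\<bar>fst (\<phi> s)\<bar> powr a - \<bar>snd (\<phi> s)\<bar> \<le> 0"
    and y_rate: "1/2 * \<bar>fst (\<phi> s)\<bar> powr a - \<bar>snd (\<phi> s)\<bar> \<le> 0" if "0 < s" "s < t" for s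
    using in_cusp[of s] that t by (auto simp: cusp_def)
  have "(fst (\<phi> t))\<^sup>2 \<le> (fst (\<phi> 0))\<^sup>2"
  proof (rule deriv_nonpos_imp_ge_within[where g="\<lambda>s. (fst (\<phi> s))\<^sup>2"])
    fix s assume "s \<in> {0..T}"
    show "((\<lambda>s. (fst (\<phi> s))\<^sup>2) has_real_derivative
        2 * (fst (\<phi> s))\<^sup>2 * (\<bar>fst (\<phi> s)\<bar> powr a - \<bar>snd (\<phi> s)\<bar>)) (at s within {0..T})"
      using fwd_sol_sysf_components(1)[OF sol \<open>s \<in> {0..T}\<close>]
      by (auto intro!: derivative_eq_intros simp: power2_eq_square algebra_simps)
  qed (use t x_rate in \<open>auto intro: mult_nonneg_nonpos\<close>)
  then show "\<bar>fst (\<phi> t)\<bar> \<le> \<bar>fst p\<bar>"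
    by (simp add: \<phi>0 abs_le_square_iff)
  have "(snd (\<phi> t))\<^sup>2 \<le> (snd (\<phi> 0))\<^sup>2"
  proof (rule deriv_nonpos_imp_ge_within[where g="\<lambda>s. (snd (\<phi> s))\<^sup>2"])
    fix s assume "s \<in> {0..T}"
    show "((\<lambda>s. (snd (\<phi> s))\<^sup>2) has_real_derivative
        2 * (snd (\<phi> s))\<^sup>2 * (1/2 * \<bar>fst (\<phi> s)\<bar> powr a - \<bar>snd (\<phi> s)\<bar>)) (at s within {0..T})"
      using fwd_sol_sysf_components(2)[OF sol \<open>s \<in> {0..T}\<close>]
      by (auto intro!: derivative_eq_intros simp: power2_eq_square algebra_simps)
  qed (use t y_rate in \<open>auto intro: mult_nonneg_nonpos\<close>)
  then show "\<bar>snd (\<phi> t)\<bar> \<le> \<bar>snd p\<bar>"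
    by (simp add: \<phi>0 abs_le_square_iff)
qed

lemma fwd_sol_sysf_inverse_square_deriv:
  assumes sol: "fwd_sol (sysf a) p I \<phi>" and s: "s \<in> I" and y: "snd (\<phi> s) \<noteq> 0"
  shows "((\<lambda>s. 1 / (snd (\<phi> s))\<^sup>2) has_real_derivative
      (2 * \<bar>snd (\<phi> s)\<bar> - \<bar>fst (\<phi> s)\<bar> powr a) / (snd (\<phi> s))\<^sup>2) (at s within I)"
proof -
  define x y where "x = fst (\<phi> s)" and "y = snd (\<phi> s)"
  have "((\<lambda>s. 1 / (snd (\<phi> s))\<^sup>2) has_real_derivative
      - (2 * y * (y * (1/2 * \<bar>x\<bar> powr a - \<bar>y\<bar>))) / (y\<^sup>2)\<^sup>2) (at s within I)"
    unfolding x_def y_def using fwd_sol_sysf_components(2)[OF sol s] y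
    by (auto intro!: derivative_eq_intros simp: power2_eq_square)
  moreover have "- (2 * y * (y * (1/2 * \<bar>x\<bar> powr a - \<bar>y\<bar>))) / (y\<^sup>2)\<^sup>2 = (2 * \<bar>y\<bar> - \<bar>x\<bar> powr a) / y\<^sup>2"
    using y by (simp add: y_def power2_eq_square field_simps)
  ultimately show ?thesis
    unfolding x_def y_def by (rule DERIV_cong)
qed

lemma fwd_sol_sysf_snd_decay:
  assumes sol: "fwd_sol (sysf a) p {0..T} \<phi>"
    and in_cusp: "\<And>s. s \<in> {0..T} \<Longrightarrow> \<phi> s \<in> cusp a 1" and t: "t \<in> {0..T}"
  shows "t * (snd (\<phi> t))\<^sup>2 \<le> \<bar>snd p\<bar>"
proof -
  define y where "y s = snd (\<phi> s)" for s
  have y0: "y 0 = snd p"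
    using sol by (simp add: fwd_sol_def y_def)
  have y_ne: "y s \<noteq> 0" if "s \<in> {0..T}" for s
    using snd_nonzero_if_cusp[OF in_cusp[OF that]] by (simp add: y_def)
  define r where "r = 1 / \<bar>y 0\<bar>"
  have "1 / (y 0)\<^sup>2 - 0 * r \<le> 1 / (y t)\<^sup>2 - t * r"
  proof (rule deriv_nonneg_imp_le_within[where g="\<lambda>s. 1 / (y s)\<^sup>2 - s * r"])
    fix s assume s: "s \<in> {0..T}"
    show "((\<lambda>s. 1 / (y s)\<^sup>2 - s * r) has_real_derivative
        (2 * \<bar>y s\<bar> - \<bar>fst (\<phi> s)\<bar> powr a) / (y s)\<^sup>2 - r) (at s within {0..T})"
      unfolding y_def
      by (rule DERIV_diff[OF fwd_sol_sysf_inverse_square_deriv[OF sol s y_ne[OF s, unfolded y_def]]])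
        (auto intro!: derivative_eq_intros)
  next
    fix s assume "0 < s" "s < t"
    then have s: "s \<in> {0..T}"
      using t by auto
    have "r \<le> 1 / \<bar>y s\<bar>"
      using fwd_sol_sysf_abs_le(2)[OF sol in_cusp s] y_ne[OF s] y0 by (simp add: y_def r_def frac_le)
    also have "1 / \<bar>y s\<bar> = \<bar>y s\<bar> / (y s)\<^sup>2"
      using y_ne[OF s] by (simp add: divide_simps power2_eq_square)
    also have "\<dots> \<le> (2 * \<bar>y s\<bar> - \<bar>fst (\<phi> s)\<bar> powr a) / (y s)\<^sup>2"
      using in_cusp[OF s] by (intro divide_right_mono) (auto simp: cusp_def y_def)
    finally show "0 \<le> (2 * \<bar>y s\<bar> - \<bar>fst (\<phi> s)\<bar> powr a) / (y s)\<^sup>2 - r"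
      by simp
  qed (use t in auto)
  moreover have "0 \<le> 1 / (y 0)\<^sup>2"
    by simp
  ultimately have "t * r \<le> 1 / (y t)\<^sup>2"
    by linarith
  then show ?thesis
    using y_ne[OF t] y_ne[of 0] t by (simp add: y_def y0[symmetric] r_def field_simps)
qed

lemma abs_fst_le_if_cusp:
  assumes "p \<in> cusp a 1" "0 < a"
  shows "\<bar>fst p\<bar> \<le> \<bar>snd p\<bar> powr (1/a)"
proof -
  have "\<bar>fst p\<bar> = (\<bar>fst p\<bar> powr a) powr (1/a)"
    using assms(2) by (simp add: powr_powr)
  also have "\<dots> \<le> \<bar>snd p\<bar> powr (1/a)"
    using assms by (intro powr_mono2) (auto simp: cusp_def)
  finally show ?thesis .
qed

lemma fwd_sol_sysf_norm_le:
  assumes a: "0 < a" and sol: "fwd_sol (sysf a) p {0..t} \<phi>"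
    and in_cusp: "\<And>s. s \<in> {0..t} \<Longrightarrow> \<phi> s \<in> cusp a 1" and t: "0 < t"
  shows "norm (\<phi> t) \<le> sqrt (\<bar>snd p\<bar> / t) powr (1/a) + sqrt (\<bar>snd p\<bar> / t)"
proof -
  have "t * (snd (\<phi> t))\<^sup>2 \<le> \<bar>snd p\<bar>"
    using fwd_sol_sysf_snd_decay[OF sol in_cusp] t by auto
  then have "(snd (\<phi> t))\<^sup>2 \<le> \<bar>snd p\<bar> / t"
    using t by (simp add: field_simps)
  then have y_le: "\<bar>snd (\<phi> t)\<bar> \<le> sqrt (\<bar>snd p\<bar> / t)"
    by (metis real_sqrt_abs real_sqrt_le_mono)
  have "\<bar>fst (\<phi> t)\<bar> \<le> \<bar>snd (\<phi> t)\<bar> powr (1/a)"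
    using abs_fst_le_if_cusp[OF in_cusp a] t by simp
  also have "\<dots> \<le> sqrt (\<bar>snd p\<bar> / t) powr (1/a)"
    using y_le a by (intro powr_mono2) auto
  finally have "\<bar>fst (\<phi> t)\<bar> \<le> sqrt (\<bar>snd p\<bar> / t) powr (1/a)" .
  moreover have "norm (\<phi> t) \<le> \<bar>fst (\<phi> t)\<bar> + \<bar>snd (\<phi> t)\<bar>"
    using norm_Pair_le[of "fst (\<phi> t)" "snd (\<phi> t)"] by simp
  ultimately show ?thesis
    using y_le by simp
qed

lemma cusp_fwd_sol_tendsto_0:
  assumes a: "1 < a" and c: "a - 1/2 \<le> c * (a - 1)"
    and sol: "fwd_sol (sysf a) p {0..} \<phi>" and p: "p \<in> cusp a c"
  shows "(\<phi> \<longlongrightarrow> 0) at_top"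
proof -
  define h where "h t = sqrt (\<bar>snd p\<bar> / t)" for t
  have "1 \<le> c"
    using invariance_coefficient_gt_1[OF a c] by simp
  have sol_T: "fwd_sol (sysf a) p {0..T} \<phi>" for T
    using sol by (rule fwd_sol_subset) auto
  have "\<phi> s \<in> cusp a 1" if "0 \<le> s" for s
    using cusp_forward_invariant[OF a c sol_T p, of s s] cusp_antimono[OF _ \<open>1 \<le> c\<close>] that by auto
  then have "norm (\<phi> t) \<le> h t powr (1/a) + h t" if "0 < t" for t
    unfolding h_def using a that by (intro fwd_sol_sysf_norm_le[OF _ sol_T]) auto
  then have bound: "\<forall>\<^sub>F t in at_top. norm (\<phi> t) \<le> h t powr (1/a) + h t"
    using eventually_gt_at_top[of 0] by (rule eventually_mono[rotated])
  have "((\<lambda>t. \<bar>snd p\<bar> / t) \<longlongrightarrow> 0) at_top"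
    by (intro tendsto_divide_0[OF tendsto_const] filterlim_at_top_imp_at_infinity filterlim_ident)
  then have h_0: "(h \<longlongrightarrow> 0) at_top"
    unfolding h_def using tendsto_real_sqrt by fastforce
  have "\<forall>\<^sub>F t in at_top. 0 \<le> h t"
    using eventually_ge_at_top[of 0] by eventually_elim (simp add: h_def)
  then have "((\<lambda>t. h t powr (1/a) + h t) \<longlongrightarrow> 0 + 0) at_top"
    using a by (intro tendsto_add h_0 tendsto_zero_powrI[OF h_0 tendsto_const]) auto
  then show ?thesis
    using Lim_null_comparison[OF bound] by simp
qed

section \<open>Global solutions in the cusp\<close>

lemma fwd_sol_sysf_on_axis: "\<exists>\<phi>. fwd_sol (sysf a) (0, y0) {0..} \<phi>"
proof -
  define \<phi> where "\<phi> t = (0 :: real, y0 / (1 + \<bar>y0\<bar> * t))" for t :: real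
  have "(\<phi> has_vector_derivative sysf a (\<phi> t)) (at t within {0..})" if "t \<in> {0..}" for t
  proof -
    have pos: "0 < 1 + \<bar>y0\<bar> * t"
      using that by (simp add: add_pos_nonneg)
    then have "((\<lambda>t. y0 / (1 + \<bar>y0\<bar> * t)) has_real_derivative - (y0 * \<bar>y0\<bar>) / (1 + \<bar>y0\<bar> * t)\<^sup>2) (at t)"
      by (auto intro!: derivative_eq_intros simp: power2_eq_square)
    then have "(\<phi> has_vector_derivative (0, - (y0 * \<bar>y0\<bar>) / (1 + \<bar>y0\<bar> * t)\<^sup>2)) (at t)"
      unfolding \<phi>_def
      by (intro has_vector_derivative_Pair) (simp_all add: has_real_derivative_iff_has_vector_derivative)
    moreover have "(0, - (y0 * \<bar>y0\<bar>) / (1 + \<bar>y0\<bar> * t)\<^sup>2) = sysf a (\<phi> t)"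
      using pos by (simp add: \<phi>_def sysf_def abs_divide power2_eq_square)
    ultimately show ?thesis
      by (simp add: has_vector_derivative_at_within)
  qed
  moreover have "\<phi> 0 = (0, y0)"
    by (simp add: \<phi>_def)
  ultimately show ?thesis
    unfolding fwd_sol_def by blast
qed

(* X' and W' are the equations for |x| and |y| in the time s with ds = |y| dt. *)
lemma fwd_sol_sysf_time_change:
  fixes X W :: "real \<Rightarrow> real"
  assumes X_pos: "\<And>s. 0 < X s" and W_pos: "\<And>s. 0 < W s"
    and X': "\<And>s. (X has_real_derivative X s * (X s powr a / W s - 1)) (at s)"
    and W': "\<And>s. (W has_real_derivative W s * (X s powr a / (2 * W s) - 1)) (at s)"
    and W_le: "\<And>s. 0 \<le> s \<Longrightarrow> W s \<le> M"
    and X0: "X 0 = \<bar>x0\<bar>" and W0: "W 0 = \<bar>y0\<bar>"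
  shows "\<exists>\<phi>. fwd_sol (sysf a) (x0, y0) {0..} \<phi>"
proof -
  have "continuous_on UNIV W"
    using W' by (intro continuous_at_imp_continuous_on) (blast intro: DERIV_isCont)
  then obtain g where g0: "g 0 = 0" and g': "\<And>t. 0 \<le> t \<Longrightarrow> (g has_real_derivative W (g t)) (at t)"
    using positive_autonomous_ode_solution[of W M] W_pos W_le by metis
  have "x0 \<noteq> 0" "y0 \<noteq> 0"
    using X_pos[of 0] W_pos[of 0] X0 W0 by auto
  define \<phi> where "\<phi> t = (sgn x0 * X (g t), sgn y0 * W (g t))" for t
  have "\<phi> 0 = (x0, y0)"
    by (simp add: \<phi>_def g0 X0 W0 sgn_mult_abs)
  moreover have "(\<phi> has_vector_derivative sysf a (\<phi> t)) (at t within {0..})" if "t \<in> {0..}" for t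
  proof -
    define s where "s = g t"
    have "(\<phi> has_vector_derivative
        (sgn x0 * (X s * (X s powr a / W s - 1) * W s), sgn y0 * (W s * (X s powr a / (2 * W s) - 1) * W s))) (at t)"
      unfolding \<phi>_def s_def using that
      by (intro has_vector_derivative_Pair)
        (auto simp: has_real_derivative_iff_has_vector_derivative[symmetric]
          intro!: DERIV_cmult DERIV_chain2[OF X'] DERIV_chain2[OF W'] g')
    moreover have "\<bar>sgn x0 * X s\<bar> = X s" "\<bar>sgn y0 * W s\<bar> = W s"
      using \<open>x0 \<noteq> 0\<close> \<open>y0 \<noteq> 0\<close> X_pos[of s] W_pos[of s] by (auto simp: abs_mult)
    then have "(sgn x0 * (X s * (X s powr a / W s - 1) * W s), sgn y0 * (W s * (X s powr a / (2 * W s) - 1) * W s))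
        = sysf a (\<phi> t)"
      using W_pos[of s] by (simp add: \<phi>_def s_def sysf_def field_simps)
    ultimately show ?thesis
      by (simp add: has_vector_derivative_at_within)
  qed
  ultimately show ?thesis
    unfolding fwd_sol_def by blast
qed

(* sigma0 / D solves the logistic equation sigma' = sigma (beta sigma - alpha) with
   sigma(0) = sigma0, and S is its antiderivative. *)
lemma logistic_profile:
  fixes \<alpha> \<beta> \<sigma>\<^sub>0 :: real
  assumes "0 < \<alpha>" "0 < \<beta>" "0 < \<sigma>\<^sub>0" "\<beta> * \<sigma>\<^sub>0 < \<alpha>"
  obtains D S :: "real \<Rightarrow> real" where "\<And>s. 0 < D s" "D 0 = 1" "S 0 = 0"
    "\<And>s. 0 \<le> s \<Longrightarrow> S s \<le> \<alpha> * s / \<beta>"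
    "\<And>s. ((\<lambda>s. ln (D s)) has_real_derivative \<alpha> - \<beta> * \<sigma>\<^sub>0 / D s) (at s)"
    "\<And>s. (S has_real_derivative \<sigma>\<^sub>0 / D s) (at s)"
proof -
  define \<gamma> where "\<gamma> = \<beta> * \<sigma>\<^sub>0 / \<alpha>"
  define D where "D s = (1 - \<gamma>) * exp (\<alpha> * s) + \<gamma>" for s
  define S where "S s = (\<alpha> * s - ln (D s)) / \<beta>" for s
  have \<gamma>: "0 < \<gamma>" "\<gamma> < 1"
    using assms by (simp_all add: \<gamma>_def)
  have D_pos: "0 < D s" for s
    using \<gamma> by (simp add: D_def add_pos_pos)
  have S_le: "S s \<le> \<alpha> * s / \<beta>" if "0 \<le> s" for s
  proof -
    have "(1 - \<gamma>) * 1 \<le> (1 - \<gamma>) * exp (\<alpha> * s)"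
      using \<gamma> assms that by (intro mult_left_mono) auto
    then have "0 \<le> ln (D s)"
      by (simp add: D_def)
    then show ?thesis
      using assms by (simp add: S_def divide_right_mono)
  qed
  have ln_D': "((\<lambda>s. ln (D s)) has_real_derivative \<alpha> - \<beta> * \<sigma>\<^sub>0 / D s) (at s)" for s
  proof -
    have "((\<lambda>s. ln (D s)) has_real_derivative (1 - \<gamma>) * (\<alpha> * exp (\<alpha> * s)) / D s) (at s)"
      unfolding D_def using D_pos[of s] by (auto intro!: derivative_eq_intros simp: D_def)
    moreover have "(1 - \<gamma>) * (\<alpha> * exp (\<alpha> * s)) = \<alpha> * D s - \<beta> * \<sigma>\<^sub>0"
      using assms by (simp add: D_def \<gamma>_def algebra_simps)
    then have "(1 - \<gamma>) * (\<alpha> * exp (\<alpha> * s)) / D s = \<alpha> - \<beta> * \<sigma>\<^sub>0 / D s"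
      using D_pos[of s] by (simp add: diff_divide_distrib)
    ultimately show ?thesis
      by (rule DERIV_cong)
  qed
  have S': "(S has_real_derivative \<sigma>\<^sub>0 / D s) (at s)" for s
  proof -
    have "(S has_real_derivative (\<alpha> * 1 - (\<alpha> - \<beta> * \<sigma>\<^sub>0 / D s)) / \<beta>) (at s)"
      unfolding S_def by (intro DERIV_cdivide DERIV_diff DERIV_cmult DERIV_ident ln_D')
    then show ?thesis
      by (rule DERIV_cong) (use assms in simp)
  qed
  have "D 0 = 1"
    by (simp add: D_def)
  moreover have "S 0 = 0"
    by (simp add: S_def \<open>D 0 = 1\<close>)
  ultimately show thesis
    using that D_pos S_le ln_D' S' by blast
qed

lemma sysf_profiles_from_logistic:
  fixes D S :: "real \<Rightarrow> real"
  assumes a: "1 < a" and u0: "0 < u0" and w0: "0 < w0" and D_pos: "\<And>s. 0 < D s"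
    and ln_D': "\<And>s. ((\<lambda>s. ln (D s)) has_real_derivative (a - 1) - (a - 1/2) * (u0 powr a / w0) / D s) (at s)"
    and S': "\<And>s. (S has_real_derivative u0 powr a / w0 / D s) (at s)"
  defines "W \<equiv> \<lambda>s. w0 * exp (S s / 2 - s)" and "X \<equiv> \<lambda>s. u0 * exp ((S s / 2 - s - ln (D s)) / a)"
  shows "(X has_real_derivative X s * (X s powr a / W s - 1)) (at s)"
    and "(W has_real_derivative W s * (X s powr a / (2 * W s) - 1)) (at s)"
proof -
  define \<sigma> where "\<sigma> = u0 powr a / w0 / D s"
  have "X s powr a = u0 powr a * exp (S s / 2 - s - ln (D s))"
    using u0 a by (simp add: X_def powr_mult exp_powr_real powr_def[of "exp _"])
  also have "\<dots> = \<sigma> * W s"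
    using D_pos[of s] w0 by (simp add: exp_diff \<sigma>_def W_def)
  finally have X_pow: "X s powr a / W s = \<sigma>"
    using w0 by (simp add: W_def)
  have "((\<lambda>s. (S s / 2 - s - ln (D s)) / a) has_real_derivative (\<sigma> / 2 - 1 - ((a - 1) - (a - 1/2) * \<sigma>)) / a) (at s)"
    unfolding \<sigma>_def using ln_D'[of s] by (intro DERIV_cdivide DERIV_diff DERIV_ident S') (simp add: field_simps)
  then have "(X has_real_derivative u0 * (exp ((S s / 2 - s - ln (D s)) / a)
      * ((\<sigma> / 2 - 1 - ((a - 1) - (a - 1/2) * \<sigma>)) / a))) (at s)"
    unfolding X_def by (intro DERIV_cmult DERIV_fun_exp)
  then have "(X has_real_derivative X s * ((\<sigma> / 2 - 1 - ((a - 1) - (a - 1/2) * \<sigma>)) / a)) (at s)"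
    by (simp add: X_def mult.assoc)
  moreover have "(\<sigma> / 2 - 1 - ((a - 1) - (a - 1/2) * \<sigma>)) / a = \<sigma> - 1"
    using a by (simp add: field_simps)
  ultimately show "(X has_real_derivative X s * (X s powr a / W s - 1)) (at s)"
    by (simp only: X_pow)
  have "(W has_real_derivative W s * (\<sigma> / 2 - 1)) (at s)"
    unfolding W_def \<sigma>_def by (auto intro!: derivative_eq_intros S' simp: algebra_simps)
  moreover have "X s powr a / (2 * W s) = \<sigma> / 2"
    using X_pow by (simp add: field_simps)
  ultimately show "(W has_real_derivative W s * (X s powr a / (2 * W s) - 1)) (at s)"
    by (simp only:)
qed

lemma sysf_profiles_in_rescaled_time:
  assumes a: "1 < a" and x0: "x0 \<noteq> 0" and y0: "y0 \<noteq> 0"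
    and small: "(a - 1/2) * \<bar>x0\<bar> powr a < (a - 1) * \<bar>y0\<bar>"
  obtains X W :: "real \<Rightarrow> real" where "\<And>s. 0 < X s" "\<And>s. 0 < W s"
    "\<And>s. (X has_real_derivative X s * (X s powr a / W s - 1)) (at s)"
    "\<And>s. (W has_real_derivative W s * (X s powr a / (2 * W s) - 1)) (at s)"
    "\<And>s. 0 \<le> s \<Longrightarrow> W s \<le> \<bar>y0\<bar>" "X 0 = \<bar>x0\<bar>" "W 0 = \<bar>y0\<bar>"
proof -
  have "0 < a - 1" "0 < a - 1/2" "0 < \<bar>x0\<bar> powr a / \<bar>y0\<bar>"
    using a x0 y0 by simp_all
  moreover have "(a - 1/2) * (\<bar>x0\<bar> powr a / \<bar>y0\<bar>) < a - 1"
    using small y0 by (simp add: field_simps)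
  ultimately obtain D S where D_pos: "\<And>s. 0 < D s" and "D 0 = 1" "S 0 = 0"
    and S_le: "\<And>s. 0 \<le> s \<Longrightarrow> S s \<le> (a - 1) * s / (a - 1/2)"
    and ln_D': "\<And>s. ((\<lambda>s. ln (D s)) has_real_derivative (a - 1) - (a - 1/2) * (\<bar>x0\<bar> powr a / \<bar>y0\<bar>) / D s) (at s)"
    and S': "\<And>s. (S has_real_derivative \<bar>x0\<bar> powr a / \<bar>y0\<bar> / D s) (at s)"
    by (rule logistic_profile) blast
  define W where "W s = \<bar>y0\<bar> * exp (S s / 2 - s)" for s
  define X where "X s = \<bar>x0\<bar> * exp ((S s / 2 - s - ln (D s)) / a)" for s
  have "0 < \<bar>x0\<bar>" "0 < \<bar>y0\<bar>"
    using x0 y0 by simp_all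
  note derivs = sysf_profiles_from_logistic[OF a this D_pos ln_D' S', folded W_def X_def]
  have W_le: "W s \<le> \<bar>y0\<bar>" if "0 \<le> s" for s
  proof -
    have "(a - 1) * s / (a - 1/2) \<le> s"
      using a that by (simp add: field_simps)
    then have "exp (S s / 2 - s) \<le> 1"
      using S_le[OF that] that by simp
    then show ?thesis
      using y0 by (simp add: W_def)
  qed
  show thesis
  proof (rule that[OF _ _ derivs W_le])
    show "0 < X s" "0 < W s" for s
      using x0 y0 by (simp_all add: X_def W_def)
    show "X 0 = \<bar>x0\<bar>" "W 0 = \<bar>y0\<bar>"
      using \<open>D 0 = 1\<close> \<open>S 0 = 0\<close> by (simp_all add: X_def W_def)
  qed
qed

lemma cusp_fwd_sol_exists:
  assumes a: "1 < a" and c: "a - 1/2 \<le> c * (a - 1)" and p: "p \<in> cusp a c"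
  shows "\<exists>\<phi>. fwd_sol (sysf a) p {0..} \<phi>"
proof (cases "fst p = 0")
  case True
  then show ?thesis
    using fwd_sol_sysf_on_axis[of a "snd p"] by (metis prod.collapse)
next
  case False
  have "0 < c"
    using invariance_coefficient_gt_1[OF a c] by simp
  then have "snd p \<noteq> 0"
    using snd_nonzero_if_cusp[OF p] by simp
  have "(a - 1/2) * \<bar>fst p\<bar> powr a \<le> (a - 1) * (c * \<bar>fst p\<bar> powr a)"
    using c by (simp add: mult_right_mono mult.assoc[symmetric] mult.commute[of "a - 1"])
  also have "\<dots> < (a - 1) * \<bar>snd p\<bar>"
    using p a by (simp add: cusp_def)
  finally obtain X W where "\<And>s. 0 < X s" "\<And>s. 0 < W s"
    "\<And>s. (X has_real_derivative X s * (X s powr a / W s - 1)) (at s)"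
    "\<And>s. (W has_real_derivative W s * (X s powr a / (2 * W s) - 1)) (at s)"
    "\<And>s. 0 \<le> s \<Longrightarrow> W s \<le> \<bar>snd p\<bar>" "X 0 = \<bar>fst p\<bar>" "W 0 = \<bar>snd p\<bar>"
    using sysf_profiles_in_rescaled_time[OF a False \<open>snd p \<noteq> 0\<close>] by blast
  then show ?thesis
    using fwd_sol_sysf_time_change[of X W a "\<bar>snd p\<bar>" "fst p" "snd p"] by simp
qed

lemma as_stable_rel_cusp:
  assumes a: "1 < a" and c: "a - 1/2 \<le> c * (a - 1)"
  shows "as_stable_rel (sysf a) {0} (cusp a c)"
proof (rule as_stable_rel_0I)
  fix p T \<phi> t
  assume p: "p \<in> cusp a c" and sol: "fwd_sol (sysf a) p {0..T} \<phi>" and t: "t \<in> {0..T}"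
  have "\<phi> s \<in> cusp a 1" if "s \<in> {0..T}" for s
    using cusp_forward_invariant[OF a c sol p that] cusp_antimono[of 1 c a]
      invariance_coefficient_gt_1[OF a c] by auto
  then have "\<bar>fst (\<phi> t)\<bar> \<le> \<bar>fst p\<bar>" "\<bar>snd (\<phi> t)\<bar> \<le> \<bar>snd p\<bar>"
    using fwd_sol_sysf_abs_le[OF sol _ t] by blast+
  then have "(fst (\<phi> t))\<^sup>2 \<le> (fst p)\<^sup>2" "(snd (\<phi> t))\<^sup>2 \<le> (snd p)\<^sup>2"
    by (simp_all add: abs_le_square_iff)
  then show "norm (\<phi> t) \<le> norm p"
    by (simp add: norm_prod_def real_sqrt_le_mono add_mono)
qed (use cusp_fwd_sol_exists[OF a c] cusp_fwd_sol_tendsto_0[OF a c] in blast)+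

section \<open>Density of the cusp\<close>

lemma open_cusp:
  assumes "0 < a"
  shows "open (cusp a c)"
  unfolding cusp_def
proof (rule open_Collect_less)
  show "continuous_on UNIV (\<lambda>p::real \<times> real. c * \<bar>fst p\<bar> powr a)"
    using assms by (intro continuous_intros continuous_on_powr') auto
qed (intro continuous_intros)

lemma measure_ball_diff_cusp_le:
  assumes a: "0 < a" and c: "0 < c" and e: "0 < e"
  shows "measure lebesgue (ball 0 e - cusp a c) \<le> 4 * c * e powr (a + 1)"
proof -
  define R where "R = cbox (-e, - (c * e powr a)) (e, c * e powr a)"
  have "ball 0 e - cusp a c \<subseteq> R"
  proof
    fix p assume p: "p \<in> ball 0 e - cusp a c"
    then have "\<bar>fst p\<bar> < e" "\<bar>snd p\<bar> < e"
      using norm_fst_le[of "fst p" "snd p"] norm_snd_le[of "snd p" "fst p"] by auto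
    moreover have "\<bar>snd p\<bar> \<le> c * \<bar>fst p\<bar> powr a"
      using p by (auto simp: cusp_def)
    moreover have "c * \<bar>fst p\<bar> powr a \<le> c * e powr a"
      using \<open>\<bar>fst p\<bar> < e\<close> a c by (intro mult_left_mono powr_mono2) auto
    ultimately show "p \<in> R"
      by (cases p) (auto simp: R_def cbox_Pair_iff)
  qed
  moreover have "ball 0 e - cusp a c \<in> sets lebesgue"
    using open_cusp[OF a] by (intro sets.Diff) (auto intro: borel_open sets_completionI_sets)
  ultimately have "measure lebesgue (ball 0 e - cusp a c) \<le> measure lebesgue R"
    by (intro measure_mono_fmeasurable) (auto simp: R_def)
  also have "measure lebesgue R = (2 * e) * (2 * (c * e powr a))"
    using e c by (simp add: R_def content_cbox_cases Basis_prod_def)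
  also have "\<dots> = 4 * c * e powr (a + 1)"
    using e by (simp add: powr_add)
  finally show ?thesis .
qed

lemma cusp_density_tendsto_1:
  assumes a: "1 < a" and c: "0 < c"
  shows "((\<lambda>e. measure lebesgue (eps_nbhd {0} e \<inter> cusp a c) / measure lebesgue (eps_nbhd {0::real \<times> real} e))
    \<longlongrightarrow> 1) (at_right 0)"
proof (rule tendsto_sandwich[OF _ _ _ tendsto_const])
  let ?ratio = "\<lambda>e. measure lebesgue (eps_nbhd {0} e \<inter> cusp a c) / measure lebesgue (eps_nbhd {0::real \<times> real} e)"
  have bounds: "1 - 4 * c / pi * e powr (a - 1) \<le> ?ratio e \<and> ?ratio e \<le> 1" if e: "0 < e" for e
  proof -
    define B where "B = ball (0::real \<times> real) e"
    have m_B: "measure lebesgue B = pi * e\<^sup>2"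
      using e by (simp add: B_def content_ball unit_ball_vol_2 power2_eq_square)
    have "B - cusp a c \<in> sets lebesgue"
      using open_cusp[of a c] a by (intro sets.Diff) (auto simp: B_def intro: borel_open sets_completionI_sets)
    then have "measure lebesgue (B - (B - cusp a c)) = measure lebesgue B - measure lebesgue (B - cusp a c)"
      using emeasure_bounded_finite[of B] by (intro measure_Diff) (auto simp: B_def)
    then have "?ratio e = 1 - measure lebesgue (B - cusp a c) / measure lebesgue B"
      using e by (simp add: Diff_Diff_Int eps_nbhd_singleton B_def[symmetric] m_B diff_divide_distrib)
    moreover have "4 * c / pi * e powr (a - 1) * (pi * e\<^sup>2) = 4 * c * e powr (a + 1)"
      using e by (simp add: powr_add powr_diff power2_eq_square)
    then have "measure lebesgue (B - cusp a c) \<le> 4 * c / pi * e powr (a - 1) * (pi * e\<^sup>2)"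
      using measure_ball_diff_cusp_le[of a c e] a c e by (simp add: B_def)
    then have "measure lebesgue (B - cusp a c) / measure lebesgue B \<le> 4 * c / pi * e powr (a - 1)"
      using e by (simp add: m_B pos_divide_le_eq)
    moreover have "0 \<le> measure lebesgue (B - cusp a c) / measure lebesgue B"
      by simp
    ultimately show ?thesis
      by linarith
  qed
  have "((\<lambda>e::real. e powr (a - 1)) \<longlongrightarrow> 0) (at_right 0)"
    using a by (intro tendsto_zero_powrI) (auto intro: tendsto_ident_at eventually_at_rightI[of 0 1])
  then have "((\<lambda>e. 1 - 4 * c / pi * e powr (a - 1)) \<longlongrightarrow> 1 - 4 * c / pi * 0) (at_right 0)"
    by (intro tendsto_intros)
  then show "((\<lambda>e. 1 - 4 * c / pi * e powr (a - 1)) \<longlongrightarrow> 1) (at_right 0)"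
    by simp
  show "\<forall>\<^sub>F e in at_right 0. 1 - 4 * c / pi * e powr (a - 1) \<le> ?ratio e"
    "\<forall>\<^sub>F e in at_right 0. ?ratio e \<le> 1"
    using bounds by (auto intro: eventually_at_rightI[of 0 1])
qed

theorem corollary2:
  fixes a :: real
  assumes "a > 1"
  shows "ess_as_stable (sysf a) {0}"
proof -
  define c where "c = (a - 1/2) / (a - 1)"
  have c: "a - 1/2 \<le> c * (a - 1)"
    using assms by (simp add: c_def)
  have "cusp a c \<in> sets lebesgue"
    using open_cusp[of a c] assms by (auto intro: borel_open sets_completionI_sets)
  moreover have "as_stable_rel (sysf a) {0} (cusp a c)"
    using assms c by (rule as_stable_rel_cusp)
  moreover have "0 < c"
    using invariance_coefficient_gt_1[OF assms c] by simp
  then have "((\<lambda>e. measure lebesgue (eps_nbhd {0} e \<inter> cusp a c) / measure lebesgue (eps_nbhd {0::real \<times> real} e))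
      \<longlongrightarrow> 1) (at_right 0)"
    using assms by (intro cusp_density_tendsto_1)
  ultimately show ?thesis
    unfolding ess_as_stable_def by blast
qed

end
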